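(* Let $a\ge 2$ be even, and let $c,e$ be odd integers with $0<c<e\le\frac a2$. Then $U=\{(a,-a),(c,-c),(e,-e)\}\subseteq\mathcal{B}$ is unavoidable.
   Context: The bicyclic inverse semigroup is $\mathcal{B}=\{(a,b)\in\mathbb{Z}\times\mathbb{Z}\mid a\ge 0,\ a+b\ge 0\}$ with multiplication $(a,b)(c,d)=(\max\{c+d,a\}-d,\ b+d)$. A subset $U\subseteq\mathcal{B}$ is called avoidable if $\mathcal{B}$ can be partitioned into two subsets $A$ and $B$ such that no element of $U$ can be written as a product $xy$ of two distinct elements $x\neq y$ both in $A$, or both in $B$. A set is unavoidable if it is not avoidable. *)

theory Defs
  imports Main
begin

definition bicyclic :: "(int \<times> int) set" where
  "bicyclic = {(a, b). a \<ge> 0 \<and> a + b \<ge> 0}"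

definition bmult :: "int \<times> int \<Rightarrow> int \<times> int \<Rightarrow> int \<times> int" where
  "bmult x y = (case x of (a, b) \<Rightarrow> case y of (c, d) \<Rightarrow> (max (c + d) a - d, b + d))"

definition avoidable :: "(int \<times> int) set \<Rightarrow> bool" where
  "avoidable U \<longleftrightarrow> (\<exists>A B. A \<union> B = bicyclic \<and> A \<inter> B = {} \<and>
     (\<forall>x\<in>A. \<forall>y\<in>A. x \<noteq> y \<longrightarrow> bmult x y \<notin> U) \<and>
     (\<forall>x\<in>B. \<forall>y\<in>B. x \<noteq> y \<longrightarrow> bmult x y \<notin> U))"

definition unavoidable :: "(int \<times> int) set \<Rightarrow> bool" where
  "unavoidable U \<longleftrightarrow> \<not> avoidable U"

end

theory Submission
  imports Defs
begin

text \<open>Write \<open>d m = (m, -m)\<close>. Any two-part partition puts two of three distinct elements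
  into the same part, so it suffices to find three elements whose three pairwise products lie
  in \<open>U\<close>. With \<open>a = c + e + 2k\<close>, \<open>k \<ge> 0\<close>, the elements \<open>d (k + c)\<close>, \<open>d (k + e)\<close> and \<open>(0, k)\<close>
  do this: \<open>d m \<cdot> d n = d (m + n)\<close>, and right multiplication by \<open>(0, k)\<close> sends \<open>d m\<close> to
  \<open>d (m - k)\<close> for \<open>m \<ge> k\<close>.\<close>

lemma bmult_diag_diag:
  assumes "0 \<le> m"
  shows "bmult (m, -m) (n, -n) = (m + n, -(m + n))"
  using assms by (simp add: bmult_def)

lemma bmult_diag_right:
  assumes "k \<le> m"
  shows "bmult (m, -m) (0, k) = (m - k, -(m - k))"
  using assms by (simp add: bmult_def)

lemma unavoidable_if_product_triangle:
  assumes "x \<in> bicyclic" "y \<in> bicyclic" "z \<in> bicyclic"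
    and "x \<noteq> y" "x \<noteq> z" "y \<noteq> z"
    and "bmult x y \<in> U" "bmult x z \<in> U" "bmult y z \<in> U"
  shows "unavoidable U"
  unfolding unavoidable_def avoidable_def
proof
  assume "\<exists>A B. A \<union> B = bicyclic \<and> A \<inter> B = {} \<and>
     (\<forall>x\<in>A. \<forall>y\<in>A. x \<noteq> y \<longrightarrow> bmult x y \<notin> U) \<and>
     (\<forall>x\<in>B. \<forall>y\<in>B. x \<noteq> y \<longrightarrow> bmult x y \<notin> U)"
  then obtain A B where cover: "A \<union> B = bicyclic"
    and free_A: "\<forall>x\<in>A. \<forall>y\<in>A. x \<noteq> y \<longrightarrow> bmult x y \<notin> U"
    and free_B: "\<forall>x\<in>B. \<forall>y\<in>B. x \<noteq> y \<longrightarrow> bmult x y \<notin> U"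
    by blast
  have "x \<in> A \<or> x \<in> B" "y \<in> A \<or> y \<in> B" "z \<in> A \<or> z \<in> B"
    using assms(1-3) cover by blast+
  then show False
    using free_A free_B assms(4-9) by blast
qed

lemma unavoidable_diag_triple:
  fixes c e k :: int
  assumes "0 \<le> k" and "0 < c" and "0 < e" and "c \<noteq> e"
  shows "unavoidable {(c + e + 2 * k, -(c + e + 2 * k)), (c, -c), (e, -e)}" (is "unavoidable ?U")
proof (rule unavoidable_if_product_triangle)
  show "bmult (k + c, -(k + c)) (k + e, -(k + e)) \<in> ?U"
    using assms by (subst bmult_diag_diag) (simp_all add: algebra_simps)
  show "bmult (k + c, -(k + c)) (0, k) \<in> ?U"
    using assms by (subst bmult_diag_right) simp_all
  show "bmult (k + e, -(k + e)) (0, k) \<in> ?U"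
    using assms by (subst bmult_diag_right) simp_all
qed (use assms in \<open>auto simp: bicyclic_def\<close>)

theorem proposition3p4:
  fixes a c e :: int
  assumes "a \<ge> 2" and "even a" and "odd c" and "odd e"
    and "0 < c" and "c < e" and "2 * e \<le> a"
  shows "unavoidable {(a, -a), (c, -c), (e, -e)}"
proof -
  have "even (a - c - e)"
    using assms(2-4) by simp
  then obtain k where k: "a - c - e = 2 * k"
    by blast
  have "0 \<le> k"
    using k assms(6,7) by linarith
  moreover have "a = c + e + 2 * k"
    using k by simp
  ultimately show ?thesis
    using unavoidable_diag_triple assms(5,6) by simp
qed

end
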